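(* Let $c>\frac12$ and $\delta>0$ be fixed. Let $\ell\ge3$ and let $\ell_1,\ell_2,\ell_3$ be positive integers with $\ell_1+\ell_2+\ell_3=\ell$. For $\mathbf y_1,\dots,\mathbf y_{\ell-2}\in\mathbb R^n$ and $\varepsilon_1,\dots,\varepsilon_{\ell-2}\in\{1,-1\}$ consider $$V_n^{-2\ell c}\int_{\mathbb R^n}\int_{\mathbb R^n}f_{c,\delta}(\mathbf x_1)\prod_{i=1}^{\ell_1-1}f_{c,\delta}(\varepsilon_i\mathbf x_1+\mathbf y_i)\; f_{c,\delta}(\mathbf x_2)\prod_{i=\ell_1}^{\ell_1+\ell_2-2}f_{c,\delta}(\varepsilon_i\mathbf x_2+\mathbf y_i)\prod_{i=\ell_1+\ell_2-1}^{\ell-2}f_{c,\delta}\big(\varepsilon_i(\mathbf x_1+\mathbf x_2)+\mathbf y_i\big)\,d\mathbf x_1\,d\mathbf x_2 .$$ There exist constants $K>0$ and $0<\rho<1$, depending only on $\ell,c,\delta$ (and not on $n$, the $\varepsilon_i$ or the $\mathbf y_i$), such that this integral is at most $K\rho^n$ for all $n\ge1$, all $\varepsilon_i$ and all $\mathbf y_i$.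
   Context: $V_n=\pi^{n/2}/\Gamma(\frac n2+1)$ is the volume of the unit ball in $\mathbb R^n$, $R_n(\delta)=(\delta/V_n)^{1/n}$, and $f_{c,\delta}(\mathbf x)=|\mathbf x|^{-2cn}$ if $|\mathbf x|>R_n(\delta)$, $f_{c,\delta}(\mathbf x)=0$ otherwise. Empty products equal $1$. *)

theory Defs
  imports "HOL-Analysis.Analysis" "HOL-Probability.Probability"
begin

text \<open>Points of R^n are represented as functions nat => real; only the
coordinates 0..n-1 matter. Lebesgue measure on R^n is the product measure.\<close>

definition Rn_measure :: "nat \<Rightarrow> (nat \<Rightarrow> real) measure" where
  "Rn_measure n = PiM {..<n} (\<lambda>_. lborel)"

definition vnorm :: "nat \<Rightarrow> (nat \<Rightarrow> real) \<Rightarrow> real" where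
  "vnorm n x = sqrt (\<Sum>i<n. (x i)\<^sup>2)"

definition ball_vol :: "nat \<Rightarrow> real" where
  "ball_vol n = pi powr (real n / 2) / Gamma (real n / 2 + 1)"

definition Rrad :: "nat \<Rightarrow> real \<Rightarrow> real" where
  "Rrad n \<delta> = (\<delta> / ball_vol n) powr (1 / real n)"

definition fcd :: "real \<Rightarrow> real \<Rightarrow> nat \<Rightarrow> (nat \<Rightarrow> real) \<Rightarrow> real" where
  "fcd c \<delta> n x = (if vnorm n x > Rrad n \<delta> then vnorm n x powr (- 2 * c * real n) else 0)"

end

theory Submission
  imports Defs
begin

text \<open>
  Bounding all but three of the factors by their supremum R^(-2cn), where R = R_n(delta), leaves
  the integral of f(x1) f(x2) f(+-(x1 + x2) + y) over R^2n. On the shell q^k R <= |x| < q^(k+1) R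
  one has f(x) <= a_k exp(-lambda_k |x|^2) with a_k = (q^k R)^(-2cn) e^(n/3) and
  lambda_k = n / (3 (q^(k+1) R)^2), so f is dominated by a series of Gaussians. The Gaussian
  integral over a triple of shells is at most
  (pi / sqrt (lambda_i lambda_j + lambda_i lambda_k + lambda_j lambda_k))^n, and AM-GM splits it
  into three factors a_k lambda_k^(-n/3), each geometric in k with ratio q^(-(2c - 2/3) n), so the
  series converges as soon as c > 1/3. Since R^n = delta / V_n, the prefactor collapses to
  delta^(2 - 2lc) Gamma(n/2 + 1)^2 (sqrt 3 e q^2 / n)^n, and the bound
  Gamma(x + 1) <= (x / (beta e))^x / (1 - beta) turns this into K rho^n with
  rho = sqrt 3 q^2 / (2 beta), which is below 1 for q = 26/25 and beta = 19/20.
\<close>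

section \<open>Gaussian integrals\<close>

lemma nn_integral_gaussian:
  fixes a m :: real
  assumes "a > 0"
  shows "(\<integral>\<^sup>+t. ennreal (exp (- (a * (t + m)\<^sup>2))) \<partial>lborel) = ennreal (sqrt (pi / a))"
proof -
  define \<sigma> where "\<sigma> = sqrt (1 / (2 * a))"
  have \<sigma>: "\<sigma> > 0" "\<sigma>\<^sup>2 = 1 / (2 * a)"
    using assms by (simp_all add: \<sigma>_def)
  have density: "exp (- (a * (t + m)\<^sup>2)) = sqrt (pi / a) * normal_density (- m) \<sigma> t" for t
    using assms \<sigma> by (simp add: normal_density_def)
  have "(\<integral>\<^sup>+t. ennreal (normal_density (- m) \<sigma> t) \<partial>lborel) = 1"
    using integrable_normal_density[OF \<sigma>(1)] integral_normal_density[OF \<sigma>(1)]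
    by (subst nn_integral_eq_integral) (auto simp: normal_density_nonneg)
  then show ?thesis
    using assms by (simp add: density ennreal_mult normal_density_nonneg nn_integral_cmult)
qed

lemma complete_square_two_centres:
  fixes a b t z :: real
  assumes "a + b > 0"
  shows "a * t\<^sup>2 + b * (t + z)\<^sup>2 = (a + b) * (t + b * z / (a + b))\<^sup>2 + a * b / (a + b) * z\<^sup>2"
proof -
  have "t + b * z / (a + b) = ((a + b) * t + b * z) / (a + b)"
    using assms by (simp add: field_simps)
  then have "(a + b) * (t + b * z / (a + b))\<^sup>2 = ((a + b) * t + b * z)\<^sup>2 / (a + b)"
    using assms by (simp add: power2_eq_square)
  then have "(a + b) * (t + b * z / (a + b))\<^sup>2 + a * b / (a + b) * z\<^sup>2
      = (((a + b) * t + b * z)\<^sup>2 + a * b * z\<^sup>2) / (a + b)"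
    by (simp add: add_divide_distrib)
  also have "\<dots> = a * t\<^sup>2 + b * (t + z)\<^sup>2"
    using assms by (simp add: power2_eq_square field_simps)
  finally show ?thesis ..
qed

lemma nn_integral_gaussian_two_centres:
  fixes a b z :: real
  assumes "a > 0" and "b \<ge> 0"
  shows "(\<integral>\<^sup>+t. ennreal (exp (- (a * t\<^sup>2 + b * (t + z)\<^sup>2))) \<partial>lborel)
     = ennreal (sqrt (pi / (a + b)) * exp (- (a * b / (a + b) * z\<^sup>2)))"
proof -
  have ab: "a + b > 0" using assms by simp
  have "(\<integral>\<^sup>+t. ennreal (exp (- (a * t\<^sup>2 + b * (t + z)\<^sup>2))) \<partial>lborel)
      = (\<integral>\<^sup>+t. ennreal (exp (- (a * b / (a + b) * z\<^sup>2)))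
                * ennreal (exp (- ((a + b) * (t + b * z / (a + b))\<^sup>2))) \<partial>lborel)"
    by (simp add: complete_square_two_centres[OF ab] ennreal_mult[symmetric] exp_add[symmetric]
        algebra_simps)
  also have "\<dots> = ennreal (exp (- (a * b / (a + b) * z\<^sup>2))) * ennreal (sqrt (pi / (a + b)))"
    by (simp add: nn_integral_cmult nn_integral_gaussian[OF ab])
  finally show ?thesis
    using ab by (simp add: ennreal_mult[symmetric] mult.commute)
qed

lemma nn_integral_gaussian_plane_le:
  fixes a b c w :: real
  assumes a: "a > 0" and b: "b > 0" and c: "c > 0"
  shows "(\<integral>\<^sup>+s. \<integral>\<^sup>+t. ennreal (exp (- (a * s\<^sup>2 + b * t\<^sup>2 + c * (s + t + w)\<^sup>2))) \<partial>lborel \<partial>lborel)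
     \<le> ennreal (pi / sqrt (a * b + a * c + b * c))"
proof -
  define \<kappa> where "\<kappa> = b * c / (b + c)"
  have \<kappa>: "\<kappa> > 0" using b c by (simp add: \<kappa>_def)
  have inner: "(\<integral>\<^sup>+t. ennreal (exp (- (a * s\<^sup>2 + b * t\<^sup>2 + c * (s + t + w)\<^sup>2))) \<partial>lborel)
      = ennreal (sqrt (pi / (b + c))) * ennreal (exp (- (a * s\<^sup>2 + \<kappa> * (s + w)\<^sup>2)))" for s
  proof -
    have "(\<integral>\<^sup>+t. ennreal (exp (- (a * s\<^sup>2 + b * t\<^sup>2 + c * (s + t + w)\<^sup>2))) \<partial>lborel)
        = (\<integral>\<^sup>+t. ennreal (exp (- (a * s\<^sup>2))) * ennreal (exp (- (b * t\<^sup>2 + c * (t + (s + w))\<^sup>2))) \<partial>lborel)"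
      by (simp add: ennreal_mult[symmetric] exp_add[symmetric] algebra_simps)
    also have "\<dots> = ennreal (exp (- (a * s\<^sup>2)))
        * ennreal (sqrt (pi / (b + c)) * exp (- (\<kappa> * (s + w)\<^sup>2)))"
      using b c by (simp add: nn_integral_cmult nn_integral_gaussian_two_centres[of b c] \<kappa>_def
          del: minus_add_distrib)
    finally show ?thesis
      using b c by (simp add: ennreal_mult[symmetric] exp_add[symmetric] mult.commute)
  qed
  have "(\<integral>\<^sup>+s. \<integral>\<^sup>+t. ennreal (exp (- (a * s\<^sup>2 + b * t\<^sup>2 + c * (s + t + w)\<^sup>2))) \<partial>lborel \<partial>lborel)
      = ennreal (sqrt (pi / (b + c))) * ennreal (sqrt (pi / (a + \<kappa>)) * exp (- (a * \<kappa> / (a + \<kappa>) * w\<^sup>2)))"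
    unfolding inner using a \<kappa>
    by (simp add: nn_integral_cmult nn_integral_gaussian_two_centres del: minus_add_distrib)
  also have "\<dots> \<le> ennreal (sqrt (pi / (b + c))) * ennreal (sqrt (pi / (a + \<kappa>)))"
    using a \<kappa> by (intro mult_left_mono ennreal_leI) (auto intro!: mult_left_le)
  also have "\<dots> = ennreal (pi / sqrt ((b + c) * (a + \<kappa>)))"
    using a b c \<kappa> by (simp add: ennreal_mult[symmetric] real_sqrt_mult[symmetric] real_sqrt_divide)
  also have "(b + c) * (a + \<kappa>) = a * b + a * c + b * c"
    using b c by (simp add: \<kappa>_def field_simps)
  finally show ?thesis .
qed

lemma sigma_finite_Rn_measure: "sigma_finite_measure (Rn_measure n)"
proof -
  interpret finite_product_sigma_finite "\<lambda>_::nat. lborel" "{..<n}"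
    by standard simp
  show ?thesis
    unfolding Rn_measure_def by (rule sigma_finite_measure_axioms)
qed

lemma nn_integral_Rn_measure_prod_pair:
  fixes g :: "nat \<Rightarrow> real \<Rightarrow> real \<Rightarrow> ennreal"
  assumes [measurable]: "\<And>j. case_prod (g j) \<in> borel_measurable (lborel \<Otimes>\<^sub>M lborel)"
  shows "(\<integral>\<^sup>+x. \<integral>\<^sup>+y. (\<Prod>j<n. g j (x j) (y j)) \<partial>Rn_measure n \<partial>Rn_measure n)
     = (\<Prod>j<n. \<integral>\<^sup>+s. \<integral>\<^sup>+t. g j s t \<partial>lborel \<partial>lborel)"
proof -
  interpret product_sigma_finite "\<lambda>_::nat. lborel :: real measure" by standard
  have "(\<integral>\<^sup>+y. (\<Prod>j<n. g j (x j) (y j)) \<partial>Rn_measure n) = (\<Prod>j<n. \<integral>\<^sup>+t. g j (x j) t \<partial>lborel)" for x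
    unfolding Rn_measure_def by (rule product_nn_integral_prod) auto
  moreover have "(\<integral>\<^sup>+x. (\<Prod>j<n. \<integral>\<^sup>+t. g j (x j) t \<partial>lborel) \<partial>Rn_measure n)
      = (\<Prod>j<n. \<integral>\<^sup>+s. \<integral>\<^sup>+t. g j s t \<partial>lborel \<partial>lborel)"
    unfolding Rn_measure_def
    by (rule product_nn_integral_prod[where f = "\<lambda>j s. \<integral>\<^sup>+t. g j s t \<partial>lborel"]) auto
  ultimately show ?thesis by simp
qed

lemma nn_integral_nn_integral_cmult:
  assumes "sigma_finite_measure N" and [measurable]: "case_prod f \<in> borel_measurable (M \<Otimes>\<^sub>M N)"
  shows "(\<integral>\<^sup>+x. \<integral>\<^sup>+y. c * f x y \<partial>N \<partial>M) = c * (\<integral>\<^sup>+x. \<integral>\<^sup>+y. f x y \<partial>N \<partial>M)"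
proof -
  interpret N: sigma_finite_measure N by fact
  show ?thesis
    by (subst nn_integral_cmult[symmetric]) (measurable, intro nn_integral_cong nn_integral_cmult, measurable)
qed

lemma vnorm_square: "(vnorm n x)\<^sup>2 = (\<Sum>j<n. (x j)\<^sup>2)"
  unfolding vnorm_def by (simp add: sum_nonneg)

lemma nn_integral_Rn_gaussian_le:
  fixes a b c e :: real and w :: "nat \<Rightarrow> real"
  assumes a: "a > 0" and b: "b > 0" and c: "c > 0" and e: "\<bar>e\<bar> = 1"
  shows "(\<integral>\<^sup>+x. \<integral>\<^sup>+y. ennreal (exp (- (a * (vnorm n x)\<^sup>2 + b * (vnorm n y)\<^sup>2
            + c * (vnorm n (\<lambda>j. e * (x j + y j) + w j))\<^sup>2))) \<partial>Rn_measure n \<partial>Rn_measure n)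
     \<le> ennreal ((pi / sqrt (a * b + a * c + b * c)) ^ n)"
proof -
  define g where "g j s t = ennreal (exp (- (a * s\<^sup>2 + b * t\<^sup>2 + c * (s + t + e * w j)\<^sup>2)))" for j s t
  have shift: "(e * (s + t) + v)\<^sup>2 = (s + t + e * v)\<^sup>2" for s t v
  proof -
    have "e\<^sup>2 = 1" using e by (metis power2_abs power_one)
    then have "e * (s + t) + v = e * (s + t + e * v)" by (simp add: algebra_simps power2_eq_square)
    then show ?thesis using \<open>e\<^sup>2 = 1\<close> by (simp add: power_mult_distrib)
  qed
  have "exp (- (a * (vnorm n x)\<^sup>2 + b * (vnorm n y)\<^sup>2 + c * (vnorm n (\<lambda>j. e * (x j + y j) + w j))\<^sup>2))
      = (\<Prod>j<n. exp (- (a * (x j)\<^sup>2 + b * (y j)\<^sup>2 + c * (x j + y j + e * w j)\<^sup>2)))" for x y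
    by (simp add: vnorm_square shift exp_sum[symmetric] sum_negf sum_subtractf sum_distrib_left)
  then have "(\<integral>\<^sup>+x. \<integral>\<^sup>+y. ennreal (exp (- (a * (vnorm n x)\<^sup>2 + b * (vnorm n y)\<^sup>2
            + c * (vnorm n (\<lambda>j. e * (x j + y j) + w j))\<^sup>2))) \<partial>Rn_measure n \<partial>Rn_measure n)
      = (\<integral>\<^sup>+x. \<integral>\<^sup>+y. (\<Prod>j<n. g j (x j) (y j)) \<partial>Rn_measure n \<partial>Rn_measure n)"
    by (simp add: g_def prod_ennreal)
  also have "\<dots> = (\<Prod>j<n. \<integral>\<^sup>+s. \<integral>\<^sup>+t. g j s t \<partial>lborel \<partial>lborel)"
    by (rule nn_integral_Rn_measure_prod_pair) (simp add: g_def)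
  also have "\<dots> \<le> (\<Prod>j<n. ennreal (pi / sqrt (a * b + a * c + b * c)))"
    unfolding g_def using a b c by (intro prod_mono_ennreal nn_integral_gaussian_plane_le)
  also have "\<dots> = ennreal ((pi / sqrt (a * b + a * c + b * c)) ^ n)"
    using a b c by (simp add: ennreal_power)
  finally show ?thesis .
qed

section \<open>Reduction to three factors\<close>

lemma ball_vol_pos: "ball_vol n > 0"
  unfolding ball_vol_def by (auto intro!: divide_pos_pos Gamma_real_pos)

lemma Rrad_pos: "\<delta> > 0 \<Longrightarrow> Rrad n \<delta> > 0"
  unfolding Rrad_def using ball_vol_pos[of n] by simp

lemma fcd_nonneg: "fcd c \<delta> n x \<ge> 0"
  by (simp add: fcd_def)

lemma fcd_le_Rrad_powr:
  assumes "c \<ge> 0" and "\<delta> > 0"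
  shows "fcd c \<delta> n x \<le> Rrad n \<delta> powr (- 2 * c * n)"
  using assms Rrad_pos[of \<delta> n] by (auto simp: fcd_def intro!: powr_mono2')

lemma prod_fcd_le_power:
  assumes "c \<ge> 0" and "\<delta> > 0" and "finite A"
  shows "(\<Prod>i\<in>A. fcd c \<delta> n (g i)) \<le> (Rrad n \<delta> powr (- 2 * c * n)) ^ card A"
proof -
  have "(\<Prod>i\<in>A. fcd c \<delta> n (g i)) \<le> (\<Prod>i\<in>A. Rrad n \<delta> powr (- 2 * c * n))"
    using fcd_le_Rrad_powr[OF assms(1,2)] by (intro prod_mono) (simp add: fcd_nonneg)
  then show ?thesis by simp
qed

lemma integrand_le_three_factors:
  fixes \<epsilon> :: "nat \<Rightarrow> real" and y :: "nat \<Rightarrow> nat \<Rightarrow> real" and n :: nat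
  assumes c: "c \<ge> 0" and \<delta>: "\<delta> > 0"
    and "l1 \<ge> 1" and "l2 \<ge> 1" and "l3 \<ge> 1" and "l1 + l2 + l3 = l"
  defines "f \<equiv> fcd c \<delta> n" and "M \<equiv> Rrad n \<delta> powr (- 2 * c * n)"
  shows "f x1 * (\<Prod>i\<in>{1..l1-1}. f (\<lambda>j. \<epsilon> i * x1 j + y i j))
           * f x2 * (\<Prod>i\<in>{l1..l1+l2-2}. f (\<lambda>j. \<epsilon> i * x2 j + y i j))
           * (\<Prod>i\<in>{l1+l2-1..l-2}. f (\<lambda>j. \<epsilon> i * (x1 j + x2 j) + y i j))
      \<le> M ^ (l - 3) * (f x1 * f x2 * f (\<lambda>j. \<epsilon> (l-2) * (x1 j + x2 j) + y (l-2) j))"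
proof -
  define T where "T = {l1+l2-1..l-2} - {l-2}"
  have last: "l - 2 \<in> {l1+l2-1..l-2}" and "card T = l3 - 1"
    using assms by (auto simp: T_def)
  have split: "(\<Prod>i\<in>{l1+l2-1..l-2}. f (\<lambda>j. \<epsilon> i * (x1 j + x2 j) + y i j))
      = f (\<lambda>j. \<epsilon> (l-2) * (x1 j + x2 j) + y (l-2) j) * (\<Prod>i\<in>T. f (\<lambda>j. \<epsilon> i * (x1 j + x2 j) + y i j))"
    unfolding T_def using last by (intro prod.remove) auto
  have P1: "(\<Prod>i\<in>{1..l1-1}. f (\<lambda>j. \<epsilon> i * x1 j + y i j)) \<le> M ^ (l1 - 1)"
    using prod_fcd_le_power[OF c \<delta>, of "{1..l1-1}"] by (simp add: f_def M_def)
  have P2: "(\<Prod>i\<in>{l1..l1+l2-2}. f (\<lambda>j. \<epsilon> i * x2 j + y i j)) \<le> M ^ (l2 - 1)"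
    using prod_fcd_le_power[OF c \<delta>, of "{l1..l1+l2-2}"] assms by (simp add: f_def M_def Suc_diff_le)
  have P3: "(\<Prod>i\<in>T. f (\<lambda>j. \<epsilon> i * (x1 j + x2 j) + y i j)) \<le> M ^ (l3 - 1)"
    using prod_fcd_le_power[OF c \<delta>, of T] \<open>card T = l3 - 1\<close> by (simp add: f_def M_def T_def)
  have "f x1 * (\<Prod>i\<in>{1..l1-1}. f (\<lambda>j. \<epsilon> i * x1 j + y i j))
           * f x2 * (\<Prod>i\<in>{l1..l1+l2-2}. f (\<lambda>j. \<epsilon> i * x2 j + y i j))
           * (\<Prod>i\<in>{l1+l2-1..l-2}. f (\<lambda>j. \<epsilon> i * (x1 j + x2 j) + y i j))
      \<le> f x1 * M ^ (l1 - 1) * f x2 * M ^ (l2 - 1)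
        * (f (\<lambda>j. \<epsilon> (l-2) * (x1 j + x2 j) + y (l-2) j) * M ^ (l3 - 1))"
    unfolding split using P1 P2 P3
    by (intro mult_mono mult_nonneg_nonneg prod_nonneg order_refl zero_le_power)
      (auto simp: f_def M_def fcd_nonneg)
  also have "\<dots> = M ^ ((l1 - 1) + (l2 - 1) + (l3 - 1))
      * (f x1 * f x2 * f (\<lambda>j. \<epsilon> (l-2) * (x1 j + x2 j) + y (l-2) j))"
    by (simp add: power_add mult_ac)
  also have "(l1 - 1) + (l2 - 1) + (l3 - 1) = l - 3"
    using assms by simp
  finally show ?thesis .
qed

section \<open>Shell decomposition\<close>

lemma ex_power_bracket:
  fixes q R N :: real
  assumes "q > 1" and "R > 0" and "R \<le> N"
  obtains k where "q ^ k * R \<le> N" and "N < q ^ Suc k * R"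
proof -
  obtain m where "N / R < q ^ m" using real_arch_pow[OF assms(1)] by blast
  then have "N < q ^ m * R" using assms(2) by (simp add: field_simps)
  then obtain k where k: "k \<le> m" "\<forall>i<k. \<not> N < q ^ i * R" "N < q ^ k * R"
    using ex_least_nat_le[of "\<lambda>i. N < q ^ i * R"] assms(3) by auto
  then have "k > 0" using assms(3) by (cases k) auto
  then show ?thesis using k by (intro that[of "k - 1"]) (auto simp: not_less)
qed

definition shell_weight :: "real \<Rightarrow> real \<Rightarrow> real \<Rightarrow> nat \<Rightarrow> nat \<Rightarrow> real" where
  "shell_weight c \<delta> q n k = (q ^ k * Rrad n \<delta>) powr (- 2 * c * n) * exp (n / 3)"

definition shell_rate :: "real \<Rightarrow> real \<Rightarrow> nat \<Rightarrow> nat \<Rightarrow> real" where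
  "shell_rate \<delta> q n k = n / (3 * (q ^ Suc k * Rrad n \<delta>)\<^sup>2)"

lemma shell_weight_nonneg: "shell_weight c \<delta> q n k \<ge> 0"
  by (simp add: shell_weight_def)

lemma shell_rate_pos: "\<delta> > 0 \<Longrightarrow> q > 0 \<Longrightarrow> n \<ge> 1 \<Longrightarrow> shell_rate \<delta> q n k > 0"
  unfolding shell_rate_def using Rrad_pos[of \<delta> n] by auto

text \<open>On the k-th shell the factor exp (n/3 - lambda_k |x|^2) is at least 1.\<close>

lemma fcd_le_shell_sum:
  assumes c: "c \<ge> 0" and \<delta>: "\<delta> > 0" and q: "q > 1"
  shows "ennreal (fcd c \<delta> n x)
    \<le> (\<Sum>k. ennreal (shell_weight c \<delta> q n k * exp (- shell_rate \<delta> q n k * (vnorm n x)\<^sup>2)))"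
proof (cases "vnorm n x > Rrad n \<delta>")
  case False
  then show ?thesis by (simp add: fcd_def)
next
  case True
  define R where "R = Rrad n \<delta>"
  define N where "N = vnorm n x"
  have R: "R > 0" using Rrad_pos[OF \<delta>] by (simp add: R_def)
  obtain k where lo: "q ^ k * R \<le> N" and hi: "N < q ^ Suc k * R"
    using ex_power_bracket[OF q R, of N] True by (auto simp: R_def N_def)
  have fcd_le: "fcd c \<delta> n x \<le> (q ^ k * R) powr (- 2 * c * n)"
    using True c lo R q unfolding fcd_def N_def[symmetric] R_def[symmetric]
    by (auto intro!: powr_mono2')
  have "shell_rate \<delta> q n k * N\<^sup>2 \<le> n / 3"
  proof -
    have "N\<^sup>2 \<le> (q ^ Suc k * R)\<^sup>2" using hi R True by (intro power_mono) (auto simp: N_def R_def)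
    then show ?thesis
      using R q unfolding shell_rate_def R_def[symmetric] by (simp add: field_simps mult_left_mono)
  qed
  then have "1 \<le> exp (n / 3) * exp (- shell_rate \<delta> q n k * N\<^sup>2)"
    by (simp add: exp_add[symmetric])
  from mult_left_mono[OF this, of "(q ^ k * R) powr (- 2 * c * n)"] fcd_le
  have "fcd c \<delta> n x \<le> shell_weight c \<delta> q n k * exp (- shell_rate \<delta> q n k * N\<^sup>2)"
    unfolding shell_weight_def R_def[symmetric] by (simp add: mult.assoc)
  also have "ennreal \<dots> \<le> (\<Sum>k. ennreal (shell_weight c \<delta> q n k * exp (- shell_rate \<delta> q n k * N\<^sup>2)))"
    using sum_le_suminf[OF summableI, of "{k}"] by simp
  finally show ?thesis by (simp add: N_def ennreal_leI)
qed

lemma nn_integral_suminf_triple: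
  fixes T :: "nat \<Rightarrow> nat \<Rightarrow> nat \<Rightarrow> 'a \<Rightarrow> ennreal"
  assumes [measurable]: "\<And>i j k. T i j k \<in> borel_measurable M"
  shows "(\<integral>\<^sup>+x. (\<Sum>i. \<Sum>j. \<Sum>k. T i j k x) \<partial>M) = (\<Sum>i. \<Sum>j. \<Sum>k. \<integral>\<^sup>+x. T i j k x \<partial>M)"
  by (simp add: nn_integral_suminf)

lemma fcd_triple_le_shell_sum:
  fixes x y z :: "nat \<Rightarrow> real" and n :: nat
  assumes "c \<ge> 0" and "\<delta> > 0" and "q > 1"
  defines "G \<equiv> \<lambda>k u. shell_weight c \<delta> q n k * exp (- shell_rate \<delta> q n k * (vnorm n u)\<^sup>2)"
  shows "ennreal (fcd c \<delta> n x * fcd c \<delta> n y * fcd c \<delta> n z)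
    \<le> (\<Sum>i. \<Sum>j. \<Sum>k. ennreal (G i x * G j y * G k z))"
proof -
  have "ennreal (fcd c \<delta> n x * fcd c \<delta> n y * fcd c \<delta> n z)
      = ennreal (fcd c \<delta> n x) * ennreal (fcd c \<delta> n y) * ennreal (fcd c \<delta> n z)"
    by (simp add: ennreal_mult fcd_def)
  also have "\<dots> \<le> (\<Sum>i. ennreal (G i x)) * (\<Sum>j. ennreal (G j y)) * (\<Sum>k. ennreal (G k z))"
    unfolding G_def using assms by (intro mult_mono fcd_le_shell_sum) auto
  also have "\<dots> = (\<Sum>i. \<Sum>j. \<Sum>k. ennreal (G i x * G j y * G k z))"
    by (simp add: G_def ennreal_mult shell_weight_nonneg ennreal_suminf_cmult ennreal_suminf_multc)
  finally show ?thesis .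
qed

lemma nn_integral_fcd_triple_le:
  fixes e :: real and w :: "nat \<Rightarrow> real"
  assumes c: "c \<ge> 0" and \<delta>: "\<delta> > 0" and q: "q > 1" and n: "n \<ge> 1" and e: "\<bar>e\<bar> = 1"
  defines "a \<equiv> shell_weight c \<delta> q n" and "r \<equiv> shell_rate \<delta> q n"
  shows "(\<integral>\<^sup>+x. \<integral>\<^sup>+y. ennreal (fcd c \<delta> n x * fcd c \<delta> n y * fcd c \<delta> n (\<lambda>j. e * (x j + y j) + w j))
           \<partial>Rn_measure n \<partial>Rn_measure n)
    \<le> (\<Sum>i. \<Sum>j. \<Sum>k. ennreal (a i * a j * a k * (pi / sqrt (r i * r j + r i * r k + r j * r k)) ^ n))"
proof -
  interpret sigma_finite_measure "Rn_measure n" by (rule sigma_finite_Rn_measure)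
  define E where "E i j k x y = ennreal (exp (- (r i * (vnorm n x)\<^sup>2
    + r j * (vnorm n y)\<^sup>2 + r k * (vnorm n (\<lambda>j. e * (x j + y j) + w j))\<^sup>2)))" for i j k x y
  define T where "T i j k x y = ennreal (a i * a j * a k) * E i j k x y" for i j k x y
  have E_measurable [measurable]:
    "case_prod (E i j k) \<in> borel_measurable (Rn_measure n \<Otimes>\<^sub>M Rn_measure n)" for i j k
    unfolding E_def vnorm_def Rn_measure_def by measurable
  have [measurable]: "case_prod (T i j k) \<in> borel_measurable (Rn_measure n \<Otimes>\<^sub>M Rn_measure n)" for i j k
    unfolding T_def by measurable
  have gaussian_le: "(\<integral>\<^sup>+x. \<integral>\<^sup>+y. E i j k x y \<partial>Rn_measure n \<partial>Rn_measure n)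
      \<le> ennreal ((pi / sqrt (r i * r j + r i * r k + r j * r k)) ^ n)" for i j k
    unfolding E_def r_def using shell_rate_pos[OF \<delta> _ n] q e by (intro nn_integral_Rn_gaussian_le) auto
  have "(\<integral>\<^sup>+x. \<integral>\<^sup>+y. ennreal (fcd c \<delta> n x * fcd c \<delta> n y * fcd c \<delta> n (\<lambda>j. e * (x j + y j) + w j))
           \<partial>Rn_measure n \<partial>Rn_measure n)
      \<le> (\<integral>\<^sup>+x. \<integral>\<^sup>+y. (\<Sum>i. \<Sum>j. \<Sum>k. T i j k x y) \<partial>Rn_measure n \<partial>Rn_measure n)"
    using fcd_triple_le_shell_sum[OF c \<delta> q]
    by (intro nn_integral_mono) (simp add: T_def E_def a_def r_def ennreal_mult[symmetric]
        shell_weight_nonneg exp_add[symmetric] algebra_simps)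
  also have "\<dots> = (\<integral>\<^sup>+x. (\<Sum>i. \<Sum>j. \<Sum>k. \<integral>\<^sup>+y. T i j k x y \<partial>Rn_measure n) \<partial>Rn_measure n)"
    by (intro nn_integral_cong nn_integral_suminf_triple) measurable
  also have "\<dots> = (\<Sum>i. \<Sum>j. \<Sum>k. \<integral>\<^sup>+x. \<integral>\<^sup>+y. T i j k x y \<partial>Rn_measure n \<partial>Rn_measure n)"
    by (rule nn_integral_suminf_triple) measurable
  also have "\<dots> \<le> (\<Sum>i. \<Sum>j. \<Sum>k. ennreal (a i * a j * a k)
      * ennreal ((pi / sqrt (r i * r j + r i * r k + r j * r k)) ^ n))"
    using gaussian_le unfolding T_def
    by (intro suminf_le summableI allI)
      (simp add: nn_integral_nn_integral_cmult[OF sigma_finite_Rn_measure E_measurable] mult_left_mono)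
  finally show ?thesis
    by (simp add: ennreal_mult'[symmetric] a_def shell_weight_nonneg)
qed

section \<open>Summation over shells\<close>

lemma three_mul_cbrt_le_sum:
  fixes u v w :: real
  assumes "u \<ge> 0" "v \<ge> 0" "w \<ge> 0"
  shows "3 * (u * v * w) powr (1/3) \<le> u + v + w"
proof -
  have "(\<Prod>i\<in>{0, 1, 2 :: nat}. [u, v, w] ! i) powr (1 / card {0, 1, 2 :: nat})
      \<le> (\<Sum>i\<in>{0, 1, 2 :: nat}. [u, v, w] ! i / card {0, 1, 2 :: nat})"
    by (rule arith_geom_mean) (use assms in \<open>auto simp: numeral_2_eq_2\<close>)
  then show ?thesis by (simp add: numeral_2_eq_2 mult.assoc)
qed

lemma pi_div_sqrt_pow_le:
  fixes a b c :: real
  assumes a: "a > 0" and b: "b > 0" and c: "c > 0"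
  shows "(pi / sqrt (a * b + a * c + b * c)) ^ n \<le> (pi / sqrt 3) ^ n * (a * b * c) powr (- real n / 3)"
proof -
  define P where "P = a * b * c"
  have P: "P > 0" using a b c by (simp add: P_def)
  have "(a * b) * (a * c) * (b * c) = P\<^sup>2" by (simp add: P_def power2_eq_square algebra_simps)
  then have "3 * (P\<^sup>2) powr (1/3) \<le> a * b + a * c + b * c"
    using three_mul_cbrt_le_sum[of "a * b" "a * c" "b * c"] a b c by simp
  moreover have "(P\<^sup>2) powr (1/3) = (P powr (1/3))\<^sup>2"
    using P by (simp add: power2_eq_square powr_mult)
  ultimately have "sqrt (3 * (P powr (1/3))\<^sup>2) \<le> sqrt (a * b + a * c + b * c)"
    by (intro real_sqrt_le_mono) simp
  then have "sqrt 3 * P powr (1/3) \<le> sqrt (a * b + a * c + b * c)"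
    using P by (simp add: real_sqrt_mult)
  then have "pi / sqrt (a * b + a * c + b * c) \<le> pi / (sqrt 3 * P powr (1/3))"
    using P a b c by (intro divide_left_mono) (auto intro!: mult_pos_pos add_pos_pos)
  also have "\<dots> = pi / sqrt 3 * P powr (- 1/3)"
    using P by (simp add: powr_minus_divide divide_simps)
  finally have "(pi / sqrt (a * b + a * c + b * c)) ^ n \<le> (pi / sqrt 3 * P powr (- 1/3)) ^ n"
    using a b c by (intro power_mono) auto
  also have "\<dots> = (pi / sqrt 3) ^ n * P powr (- real n / 3)"
    using P by (simp only: power_mult_distrib powr_power) simp
  finally show ?thesis by (simp add: P_def)
qed

definition shell_const :: "real \<Rightarrow> real \<Rightarrow> real \<Rightarrow> nat \<Rightarrow> real" where
  "shell_const c \<delta> q n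
     = exp (n / 3) * (3 / n) powr (n / 3) * q powr (2 * n / 3) * Rrad n \<delta> powr (2 * n / 3 - 2 * c * n)"

definition shell_ratio :: "real \<Rightarrow> real \<Rightarrow> nat \<Rightarrow> real" where
  "shell_ratio c q n = q powr (- (2 * c - 2 / 3) * n)"

lemma shell_weight_mult_rate_powr:
  assumes \<delta>: "\<delta> > 0" and q: "q > 0" and n: "n \<ge> 1"
  shows "shell_weight c \<delta> q n k * shell_rate \<delta> q n k powr (- real n / 3)
    = shell_const c \<delta> q n * shell_ratio c q n ^ k"
proof -
  define R where "R = Rrad n \<delta>"
  have R: "R > 0" using Rrad_pos[OF \<delta>] by (simp add: R_def)
  have n0: "real n > 0" using n by simp
  have "shell_weight c \<delta> q n k * shell_rate \<delta> q n k powr (- real n / 3)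
     = exp ((- 2 * c * n) * (k * ln q + ln R) + n / 3
            + (- real n / 3) * (ln n - ln 3 - 2 * ((k + 1) * ln q + ln R)))"
    using R q n0 unfolding shell_weight_def shell_rate_def R_def[symmetric]
    by (simp add: powr_def ln_mult ln_div ln_realpow flip: exp_add, simp add: algebra_simps)
  also have "\<dots> = exp (n / 3 + (n / 3) * (ln 3 - ln n) + (2 * n / 3) * ln q
            + (2 * n / 3 - 2 * c * n) * ln R + k * ((- (2 * c - 2 / 3) * n) * ln q))"
    by (rule arg_cong[where f = exp]) (simp add: algebra_simps)
  also have "\<dots> = shell_const c \<delta> q n * shell_ratio c q n ^ k"
    using R q n0 unfolding shell_const_def shell_ratio_def R_def[symmetric]
    by (simp add: powr_def ln_div exp_add exp_of_nat_mult[symmetric])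
  finally show ?thesis .
qed

lemma shell_ratio_bounds:
  assumes "c > 1/3" and "q > 1" and "n \<ge> 1"
  shows "0 < shell_ratio c q n" and "shell_ratio c q n \<le> shell_ratio c q 1" and "shell_ratio c q 1 < 1"
  using assms by (auto simp: shell_ratio_def mult_le_cancel_left1 intro!: powr_mono powr_less_one)

lemma shell_triple_sum_le:
  assumes c: "c > 1/3" and \<delta>: "\<delta> > 0" and q: "q > 1" and n: "n \<ge> 1"
  defines "a \<equiv> shell_weight c \<delta> q n" and "r \<equiv> shell_rate \<delta> q n" and "z \<equiv> shell_ratio c q n"
  shows "(\<Sum>i. \<Sum>j. \<Sum>k. ennreal (a i * a j * a k * (pi / sqrt (r i * r j + r i * r k + r j * r k)) ^ n))
     \<le> ennreal ((pi / sqrt 3) ^ n * shell_const c \<delta> q n ^ 3 * (1 / (1 - z)) ^ 3)"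
proof -
  define C where "C = (pi / sqrt 3) ^ n * shell_const c \<delta> q n ^ 3"
  have z: "0 < z" "z < 1" using shell_ratio_bounds[OF c q n] by (auto simp: z_def)
  have C: "C \<ge> 0" by (simp add: C_def shell_const_def)
  have "(\<Sum>i. \<Sum>j. \<Sum>k. ennreal (a i * a j * a k * (pi / sqrt (r i * r j + r i * r k + r j * r k)) ^ n))
     \<le> (\<Sum>i. \<Sum>j. \<Sum>k. ennreal C * (ennreal (z ^ i) * ennreal (z ^ j) * ennreal (z ^ k)))"
  proof (intro suminf_le summableI allI)
    fix i j k
    have r: "r i > 0" "r j > 0" "r k > 0" using shell_rate_pos[OF \<delta> _ n] q by (auto simp: r_def)
    have "a i * a j * a k * (pi / sqrt (r i * r j + r i * r k + r j * r k)) ^ n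
        \<le> a i * a j * a k * ((pi / sqrt 3) ^ n * (r i * r j * r k) powr (- real n / 3))"
      using r by (intro mult_left_mono pi_div_sqrt_pow_le) (auto simp: a_def shell_weight_nonneg)
    also have "\<dots> = (pi / sqrt 3) ^ n * ((a i * r i powr (- real n / 3))
        * (a j * r j powr (- real n / 3)) * (a k * r k powr (- real n / 3)))"
      using r by (simp add: powr_mult algebra_simps)
    also have "\<dots> = C * (z ^ i * z ^ j * z ^ k)"
      unfolding a_def r_def z_def C_def shell_weight_mult_rate_powr[OF \<delta> order.strict_trans[OF zero_less_one q] n]
      by (simp add: algebra_simps power3_eq_cube)
    finally show "ennreal (a i * a j * a k * (pi / sqrt (r i * r j + r i * r k + r j * r k)) ^ n)
        \<le> ennreal C * (ennreal (z ^ i) * ennreal (z ^ j) * ennreal (z ^ k))"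
      using z C by (simp add: ennreal_mult[symmetric] ennreal_leI)
  qed
  also have "\<dots> = ennreal C * (\<Sum>i. ennreal (z ^ i)) ^ 3"
    by (simp add: power3_eq_cube mult.assoc)
  also have "(\<Sum>i. ennreal (z ^ i)) = ennreal (1 / (1 - z))"
    using z by (intro suminf_ennreal_eq geometric_sums) auto
  finally show ?thesis
    using z C by (simp add: C_def ennreal_mult[symmetric] ennreal_power)
qed

lemma nn_integral_fcd_triple_le_geometric:
  fixes e :: real and w :: "nat \<Rightarrow> real"
  assumes c: "c > 1/3" and \<delta>: "\<delta> > 0" and q: "q > 1" and n: "n \<ge> 1" and e: "\<bar>e\<bar> = 1"
  shows "(\<integral>\<^sup>+x. \<integral>\<^sup>+y. ennreal (fcd c \<delta> n x * fcd c \<delta> n y * fcd c \<delta> n (\<lambda>j. e * (x j + y j) + w j))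
           \<partial>Rn_measure n \<partial>Rn_measure n)
    \<le> ennreal ((pi / sqrt 3) ^ n * shell_const c \<delta> q n ^ 3 * (1 / (1 - shell_ratio c q n)) ^ 3)"
  using order.trans[OF nn_integral_fcd_triple_le shell_triple_sum_le] assms by simp

section \<open>The prefactor\<close>

lemma powr_mult_exp_le:
  fixes x \<beta> t :: real
  assumes x: "x > 0" and \<beta>: "\<beta> > 0" and t: "t \<ge> 0"
  shows "t powr x * exp (- \<beta> * t) \<le> (x / (\<beta> * exp 1)) powr x"
proof (cases "t = 0")
  case True
  then show ?thesis using x by simp
next
  case False
  then have t0: "t > 0" using t by simp
  have "x * ln (\<beta> * t / x) \<le> x * (\<beta> * t / x - 1)"
    using \<beta> t0 x by (intro mult_left_mono ln_le_minus_one) auto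
  then have "x * ln t - \<beta> * t \<le> x * (ln x - ln \<beta> - 1)"
    using \<beta> t0 x by (simp add: ln_mult ln_div algebra_simps)
  have "t powr x * exp (- \<beta> * t) = exp (x * ln t - \<beta> * t)"
    using t0 by (simp add: powr_def exp_diff exp_minus field_simps)
  also have "\<dots> \<le> exp (x * (ln x - ln \<beta> - 1))"
    using \<open>x * ln t - \<beta> * t \<le> _\<close> by simp
  also have "\<dots> = (x / (\<beta> * exp 1)) powr x"
    using x \<beta> by (simp add: powr_def ln_div ln_mult algebra_simps)
  finally show ?thesis .
qed

lemma Gamma_plus_one_le:
  fixes x \<beta> :: real
  assumes x: "x > 0" and \<beta>: "0 < \<beta>" "\<beta> < 1"
  shows "Gamma (x + 1) \<le> (x / (\<beta> * exp 1)) powr x / (1 - \<beta>)"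
proof -
  define K where "K = (x / (\<beta> * exp 1)) powr x"
  have pointwise: "indicator {0..} t * t powr x / exp t \<le> K / (1 - \<beta>) * exponential_density (1 - \<beta>) t"
    for t :: real
  proof (cases "t \<ge> 0")
    case True
    have "t powr x / exp t = t powr x * exp (- \<beta> * t) * exp (- t * (1 - \<beta>))"
      by (simp add: exp_add[symmetric] exp_minus field_simps)
    also have "\<dots> \<le> K * exp (- t * (1 - \<beta>))"
      unfolding K_def using powr_mult_exp_le[OF x \<beta>(1) True] by (intro mult_right_mono) auto
    finally show ?thesis
      using True \<beta> by (simp add: exponential_density_def mult_ac)
  qed (simp add: exponential_density_def)
  have "ennreal (Gamma (x + 1)) = (\<integral>\<^sup>+t. ennreal (indicator {0..} t * t powr x / exp t) \<partial>lborel)"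
    using Gamma_conv_nn_integral_real[of "x + 1"] x by simp
  also have "\<dots> \<le> (\<integral>\<^sup>+t. ennreal (K / (1 - \<beta>)) * ennreal (exponential_density (1 - \<beta>) t) \<partial>lborel)"
    using pointwise \<beta> by (intro nn_integral_mono)
      (auto simp: K_def ennreal_mult[symmetric] exponential_density_nonneg intro!: ennreal_leI)
  also have "\<dots> = ennreal (K / (1 - \<beta>))"
  proof -
    interpret prob_space "density lborel (exponential_density (1 - \<beta>))"
      using \<beta> by (intro prob_space_exponential_density) simp
    show ?thesis
      using emeasure_space_1 by (simp add: nn_integral_cmult emeasure_density)
  qed
  finally show ?thesis
    using \<beta> by (simp add: K_def ennreal_le_iff)
qed

lemma Gamma_half_square_le:
  assumes n: "n \<ge> 1" and \<beta>: "0 < \<beta>" "\<beta> < 1"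
  shows "Gamma (real n / 2 + 1) ^ 2 \<le> (n / (2 * \<beta> * exp 1)) ^ n / (1 - \<beta>)\<^sup>2"
proof -
  define y where "y = n / (2 * \<beta> * exp 1)"
  have y: "y > 0" using n \<beta> by (simp add: y_def)
  have "Gamma (real n / 2 + 1) \<le> y powr (real n / 2) / (1 - \<beta>)"
    using Gamma_plus_one_le[of "real n / 2" \<beta>] n \<beta> by (simp add: y_def mult.assoc)
  then have "Gamma (real n / 2 + 1) ^ 2 \<le> (y powr (real n / 2) / (1 - \<beta>))\<^sup>2"
    using n by (intro power_mono) (auto intro: Gamma_real_nonneg)
  also have "\<dots> = y ^ n / (1 - \<beta>)\<^sup>2"
    using y by (simp add: power_divide power2_eq_square powr_add[symmetric] powr_realpow)
  finally show ?thesis by (simp add: y_def)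
qed

lemma ln_ball_vol: "ln (ball_vol n) = real n / 2 * ln pi - ln (Gamma (real n / 2 + 1))"
proof -
  define G where "G = Gamma (real n / 2 + 1)"
  have "G > 0" unfolding G_def by (rule Gamma_real_pos) simp
  then show ?thesis unfolding ball_vol_def G_def[symmetric] by (simp add: ln_div ln_powr)
qed

lemma ln_Rrad: "\<delta> > 0 \<Longrightarrow> ln (Rrad n \<delta>) = (ln \<delta> - ln (ball_vol n)) / real n"
  unfolding Rrad_def using ball_vol_pos[of n] by (simp add: powr_def ln_div)

lemma prefactor_eq:
  fixes c \<delta> q :: real and n l :: nat
  assumes \<delta>: "\<delta> > 0" and q: "q > 0" and n: "n \<ge> 1" and l: "l \<ge> 3"
  shows "ball_vol n powr (- 2 * real l * c) * (Rrad n \<delta> powr (- 2 * c * n)) ^ (l - 3)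
       * (pi / sqrt 3) ^ n * shell_const c \<delta> q n ^ 3
     = \<delta> powr (2 - 2 * real l * c) * Gamma (real n / 2 + 1) ^ 2 * (sqrt 3 * exp 1 * q\<^sup>2 / n) ^ n"
proof -
  define V where "V = ball_vol n"
  define G where "G = Gamma (real n / 2 + 1)"
  define L where "L = (ln \<delta> - ln V) / real n"
  have V: "V > 0" using ball_vol_pos by (simp add: V_def)
  have G: "G > 0" unfolding G_def by (intro Gamma_real_pos) simp
  have R: "Rrad n \<delta> > 0" "ln (Rrad n \<delta>) = L"
    using Rrad_pos[OF \<delta>] ln_Rrad[OF \<delta>] by (simp_all add: L_def V_def)
  have n0: "real n > 0" using n by simp
  have pow: "x ^ k = exp (real k * ln x)" if "x > 0" for x :: real and k
    using that by (simp add: exp_of_nat_mult)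
  have "ball_vol n powr (- 2 * real l * c) * (Rrad n \<delta> powr (- 2 * c * n)) ^ (l - 3)
       * (pi / sqrt 3) ^ n * shell_const c \<delta> q n ^ 3
     = exp ((- 2 * real l * c) * ln V + (real l - 3) * ((- 2 * c * n) * L)
        + n * (ln pi - ln 3 / 2) + 3 * (n / 3 + (n / 3) * (ln 3 - ln n) + (2 * n / 3) * ln q
        + (2 * n / 3 - 2 * c * n) * L))"
    using V R q n0 l unfolding shell_const_def V_def[symmetric]
    by (simp add: pow powr_def ln_mult ln_div ln_sqrt of_nat_diff exp_add[symmetric])
  also have "\<dots> = exp ((2 - 2 * real l * c) * ln \<delta> + 2 * ln G + n * (ln 3 / 2 + 1 + 2 * ln q - ln n))"
    unfolding L_def V_def ln_ball_vol G_def[symmetric] using n0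
    by (intro arg_cong[where f = exp]) (simp add: field_simps)
  also have "\<dots> = \<delta> powr (2 - 2 * real l * c) * G\<^sup>2 * (sqrt 3 * exp 1 * q\<^sup>2 / n) ^ n"
    using \<delta> G q n0 by (simp add: pow powr_def ln_mult ln_div ln_sqrt exp_add[symmetric] algebra_simps)
  finally show ?thesis by (simp add: G_def)
qed

lemma prefactor_le:
  fixes c \<delta> q \<beta> :: real and n l :: nat
  assumes \<delta>: "\<delta> > 0" and q: "q > 0" and n: "n \<ge> 1" and l: "l \<ge> 3" and \<beta>: "0 < \<beta>" "\<beta> < 1"
  shows "ball_vol n powr (- 2 * real l * c) * (Rrad n \<delta> powr (- 2 * c * n)) ^ (l - 3)
       * (pi / sqrt 3) ^ n * shell_const c \<delta> q n ^ 3
     \<le> \<delta> powr (2 - 2 * real l * c) / (1 - \<beta>)\<^sup>2 * (sqrt 3 * q\<^sup>2 / (2 * \<beta>)) ^ n"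
proof -
  have rearrange: "d * (X ^ n / D) * Y ^ n = d / D * (X * Y) ^ n" for d X Y D :: real
    by (simp add: power_mult_distrib)
  have "\<delta> powr (2 - 2 * real l * c) * Gamma (real n / 2 + 1) ^ 2 * (sqrt 3 * exp 1 * q\<^sup>2 / n) ^ n
      \<le> \<delta> powr (2 - 2 * real l * c) * ((n / (2 * \<beta> * exp 1)) ^ n / (1 - \<beta>)\<^sup>2)
        * (sqrt 3 * exp 1 * q\<^sup>2 / n) ^ n"
    using Gamma_half_square_le[OF n \<beta>] q by (intro mult_right_mono mult_left_mono) auto
  also have "\<dots> = \<delta> powr (2 - 2 * real l * c) / (1 - \<beta>)\<^sup>2
      * ((n / (2 * \<beta> * exp 1)) * (sqrt 3 * exp 1 * q\<^sup>2 / n)) ^ n"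
    by (rule rearrange)
  also have "(n / (2 * \<beta> * exp 1)) * (sqrt 3 * exp 1 * q\<^sup>2 / n) = sqrt 3 * q\<^sup>2 / (2 * \<beta>)"
    using n by (simp add: field_simps)
  finally show ?thesis by (simp only: prefactor_eq[OF \<delta> q n l])
qed

lemma nn_integral_fcd_product_le:
  fixes \<epsilon> :: "nat \<Rightarrow> real" and y :: "nat \<Rightarrow> nat \<Rightarrow> real"
  assumes c: "c > 1/3" and \<delta>: "\<delta> > 0" and l: "l \<ge> 3"
    and ls: "l1 \<ge> 1" "l2 \<ge> 1" "l3 \<ge> 1" "l1 + l2 + l3 = l"
    and q: "q > 1" and n: "n \<ge> 1" and \<epsilon>: "\<forall>i \<in> {1..l-2}. \<epsilon> i = 1 \<or> \<epsilon> i = -1"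
  defines "V \<equiv> ball_vol n powr (- 2 * real l * c)" and "M \<equiv> Rrad n \<delta> powr (- 2 * c * n)"
    and "B \<equiv> (pi / sqrt 3) ^ n * shell_const c \<delta> q n ^ 3 * (1 / (1 - shell_ratio c q n)) ^ 3"
  shows "ennreal V * (\<integral>\<^sup>+ x1. \<integral>\<^sup>+ x2.
         ennreal (fcd c \<delta> n x1 * (\<Prod>i\<in>{1..l1-1}. fcd c \<delta> n (\<lambda>j. \<epsilon> i * x1 j + y i j))
           * fcd c \<delta> n x2 * (\<Prod>i\<in>{l1..l1+l2-2}. fcd c \<delta> n (\<lambda>j. \<epsilon> i * x2 j + y i j))
           * (\<Prod>i\<in>{l1+l2-1..l-2}. fcd c \<delta> n (\<lambda>j. \<epsilon> i * (x1 j + x2 j) + y i j)))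
        \<partial>Rn_measure n \<partial>Rn_measure n) \<le> ennreal (V * (M ^ (l - 3) * B))"
    (is "ennreal V * (\<integral>\<^sup>+ x1. \<integral>\<^sup>+ x2. ennreal (?f x1 x2) \<partial>Rn_measure n \<partial>Rn_measure n) \<le> _")
proof -
  define e where "e = \<epsilon> (l - 2)"
  define F where "F u v = ennreal (fcd c \<delta> n u * fcd c \<delta> n v
    * fcd c \<delta> n (\<lambda>j. e * (u j + v j) + y (l - 2) j))" for u v
  have "l - 2 \<in> {1..l-2}" using l by simp
  then have e: "\<bar>e\<bar> = 1" using \<epsilon> unfolding e_def by fastforce
  have F_measurable: "case_prod F \<in> borel_measurable (Rn_measure n \<Otimes>\<^sub>M Rn_measure n)"
    unfolding F_def fcd_def vnorm_def Rn_measure_def by measurable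
  have M: "M \<ge> 0" by (simp add: M_def)
  have "ennreal V * (\<integral>\<^sup>+ x1. \<integral>\<^sup>+ x2. ennreal (?f x1 x2) \<partial>Rn_measure n \<partial>Rn_measure n)
      \<le> ennreal V * (\<integral>\<^sup>+ x1. \<integral>\<^sup>+ x2. ennreal (M ^ (l - 3)) * F x1 x2 \<partial>Rn_measure n \<partial>Rn_measure n)"
    using integrand_le_three_factors[of c \<delta> l1 l2 l3 l n] c \<delta> ls M
    by (intro mult_left_mono nn_integral_mono)
      (simp_all add: F_def M_def e_def ennreal_mult[symmetric] fcd_nonneg ennreal_leI)
  also have "\<dots> = ennreal V * (ennreal (M ^ (l - 3)) * (\<integral>\<^sup>+ x1. \<integral>\<^sup>+ x2. F x1 x2 \<partial>Rn_measure n \<partial>Rn_measure n))"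
    by (simp only: nn_integral_nn_integral_cmult[OF sigma_finite_Rn_measure F_measurable])
  also have "\<dots> \<le> ennreal V * (ennreal (M ^ (l - 3)) * ennreal B)"
    unfolding F_def B_def using nn_integral_fcd_triple_le_geometric[OF c \<delta> q n e]
    by (intro mult_left_mono) simp_all
  also have "\<dots> = ennreal (V * (M ^ (l - 3) * B))"
    using M by (simp add: V_def ennreal_mult')
  finally show ?thesis .
qed

lemma prefactor_shell_bound_le:
  assumes c: "c > 1/3" and \<delta>: "\<delta> > 0" and l: "l \<ge> 3" and q: "q > 1" and \<beta>: "0 < \<beta>" "\<beta> < 1"
    and n: "n \<ge> 1"
  shows "ball_vol n powr (- 2 * real l * c) * ((Rrad n \<delta> powr (- 2 * c * n)) ^ (l - 3)
      * ((pi / sqrt 3) ^ n * shell_const c \<delta> q n ^ 3 * (1 / (1 - shell_ratio c q n)) ^ 3))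
    \<le> \<delta> powr (2 - 2 * real l * c) / ((1 - \<beta>)\<^sup>2 * (1 - shell_ratio c q 1) ^ 3)
      * (sqrt 3 * q\<^sup>2 / (2 * \<beta>)) ^ n"
proof -
  have z: "0 < shell_ratio c q n" "shell_ratio c q n \<le> shell_ratio c q 1" "shell_ratio c q 1 < 1"
    using shell_ratio_bounds[OF c q n] by auto
  have "ball_vol n powr (- 2 * real l * c) * ((Rrad n \<delta> powr (- 2 * c * n)) ^ (l - 3)
      * ((pi / sqrt 3) ^ n * shell_const c \<delta> q n ^ 3 * (1 / (1 - shell_ratio c q n)) ^ 3))
    = (ball_vol n powr (- 2 * real l * c) * (Rrad n \<delta> powr (- 2 * c * n)) ^ (l - 3)
       * (pi / sqrt 3) ^ n * shell_const c \<delta> q n ^ 3) * (1 / (1 - shell_ratio c q n)) ^ 3"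
    by (simp add: mult_ac)
  also have "\<dots> \<le> (\<delta> powr (2 - 2 * real l * c) / (1 - \<beta>)\<^sup>2 * (sqrt 3 * q\<^sup>2 / (2 * \<beta>)) ^ n)
      * (1 / (1 - shell_ratio c q 1)) ^ 3"
  proof (rule mult_mono)
    show "(1 / (1 - shell_ratio c q n)) ^ 3 \<le> (1 / (1 - shell_ratio c q 1)) ^ 3"
      using z by (intro power_mono divide_left_mono mult_pos_pos) auto
  qed (use prefactor_le[OF \<delta> _ n l \<beta>] q z \<beta> in auto)
  also have "\<dots> = \<delta> powr (2 - 2 * real l * c) / ((1 - \<beta>)\<^sup>2 * (1 - shell_ratio c q 1) ^ 3)
      * (sqrt 3 * q\<^sup>2 / (2 * \<beta>)) ^ n"
    by (simp add: power_one_over)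
  finally show ?thesis .
qed

theorem theorem5p6:
  fixes c \<delta> :: real and l l1 l2 l3 :: nat
  assumes "c > 1/2" and "\<delta> > 0" and "l \<ge> 3"
    and "l1 \<ge> 1" and "l2 \<ge> 1" and "l3 \<ge> 1" and "l1 + l2 + l3 = l"
  shows "\<exists>K \<rho>. K > 0 \<and> 0 < \<rho> \<and> \<rho> < 1 \<and>
    (\<forall>n \<ge> 1. \<forall>(\<epsilon> :: nat \<Rightarrow> real) (y :: nat \<Rightarrow> nat \<Rightarrow> real).
      (\<forall>i \<in> {1..l-2}. \<epsilon> i = 1 \<or> \<epsilon> i = -1) \<longrightarrow>
      ennreal (ball_vol n powr (- 2 * real l * c)) *
      (\<integral>\<^sup>+ x1. \<integral>\<^sup>+ x2.
         ennreal (fcd c \<delta> n x1 * (\<Prod>i\<in>{1..l1-1}. fcd c \<delta> n (\<lambda>j. \<epsilon> i * x1 j + y i j))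
           * fcd c \<delta> n x2 * (\<Prod>i\<in>{l1..l1+l2-2}. fcd c \<delta> n (\<lambda>j. \<epsilon> i * x2 j + y i j))
           * (\<Prod>i\<in>{l1+l2-1..l-2}. fcd c \<delta> n (\<lambda>j. \<epsilon> i * (x1 j + x2 j) + y i j)))
        \<partial>Rn_measure n \<partial>Rn_measure n)
      \<le> ennreal (K * \<rho> ^ n))"
proof -
  define q :: real where "q = 26/25"
  define \<beta> :: real where "\<beta> = 19/20"
  define K where "K = \<delta> powr (2 - 2 * real l * c) / ((1 - \<beta>)\<^sup>2 * (1 - shell_ratio c q 1) ^ 3)"
  define \<rho> where "\<rho> = sqrt 3 * q\<^sup>2 / (2 * \<beta>)"
  have c: "c > 1/3" and q: "q > 1" and \<beta>: "0 < \<beta>" "\<beta> < 1"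
    using assms(1) by (auto simp: q_def \<beta>_def)
  have "K > 0"
    using shell_ratio_bounds(3)[OF c q order.refl] assms(2) by (simp add: K_def \<beta>_def)
  moreover have "sqrt 3 < 11875 / 6760"
    by (rule real_less_lsqrt) (simp_all add: power2_eq_square)
  then have "0 < \<rho> \<and> \<rho> < 1"
    by (simp add: \<rho>_def q_def \<beta>_def power2_eq_square)
  moreover note order.trans[OF nn_integral_fcd_product_le[OF c assms(2-7) q]
      ennreal_leI[OF prefactor_shell_bound_le[OF c assms(2,3) q \<beta>]]]
  ultimately show ?thesis
    unfolding K_def \<rho>_def by blast
qed

end
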